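(* In the protocol IT-HS described in the context, with $f<\frac{n}{3}$ Byzantine parties, if two nonfaulty parties send the messages $\langle key1,val,v\rangle$ and $\langle key1,val',v\rangle$ (for the same view $v$), then $val=val'$.
   Context: Model. $n$ parties with inputs $x_i$; up to $f$ Byzantine (arbitrary behaviour), the rest nonfaulty; authenticated point-to-point channels; partial synchrony: after an unknown time GST every message arrives within known $\Delta$ time and clocks are synchronized, before GST delays are arbitrary but finite. Protocol IT-HS (party $i$). Variables: $lock\gets 0$, $lock\_val\gets x_i$; $key3\gets 0$, $key3\_val\gets x_i$; $key2\gets 0$, $key2\_val\gets x_i$, $prev\_key2\gets -1$; $key1\gets 0$, $key1\_val\gets x_i$, $prev\_key1\gets -1$; $view\gets 0$; $highest\_request[j]\gets 0$, $highest\_abort[j]\gets 0$ for $j\in[n]$. "Send-upon-join $m$": for each $j$, send $m$ to $j$ as soon as $highest\_request[j]$ equals the current view. Background: (B1) on $\langle request,v\rangle$ from $j$, $highest\_request[j]\gets\max(highest\_request[j],v)$. (B2) on $\langle done,val\rangle$ from $f+1$ parties with the same $val$: if no $done$ sent yet, send $\langle done,val\rangle$ to all. (B3) on $\langle done,val\rangle$ from $n-f$ parties with the same $val$: decide $val$, terminate. (B4) on $\langle abort,v\rangle$ from $j$ with $highest\_abort[j]<v$: $highest\_abort[j]\gets v$; $u\gets$ the $(f+1)$-th largest entry of $highest\_abort$; if $u>highest\_abort[i]$ send $\langle abort,u\rangle$ to all and set $highest\_abort[i]\gets u$; $w\gets$ the $(n-f)$-th largest entry; if $w\ge view$ set $view\gets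 w+1$. Views: for each value $v$ of $view$, while $view=v$: fresh per-view state; after $11\Delta$ local time send $\langle abort,v\rangle$ to all; ignore other views' messages except $abort$, $done$, $request$; primary $p=(v\bmod n)+1$. View change: send $\langle request,v\rangle$ to all; when $highest\_request[p]=v$ send $\langle suggest,key3,key3\_val,key2,key2\_val,prev\_key2,v\rangle$ to $p$; send-upon-join $\langle proof,key1,key1\_val,prev\_key1,v\rangle$. If $i=p$: upon first $\langle suggest,k3,v3,k2,v2,pk2,v\rangle$ from a party, if $pk2<k2<v$ add $(k2,v2,pk2)$ to $key2\_proofs$; if $k3=0$ add $(k3,v3)$ to $suggestions$; else if $k3<v$ add $(k3,v3)$ as soon as at least $f+1$ triples $(k,w,pk)\in key2\_proofs$ satisfy $k3\le pk$ or ($k3\le k$ and $w=v3$); once $|suggestions|\ge n-f$, send-upon-join $\langle propose,k,w,v\rangle$ for $(k,w)\in suggestions$ with maximal $k$. Message processing: upon first $\langle proof,k1,v1,pk1,v\rangle$ from a party, if $v>k1>pk1$ add $(k1,v1,pk1)$ to $proofs$. Upon first $\langle propose,key,val,v\rangle$ from $p$: if $lock=0$ or $val=lock\_val$, send-upon-join $\langle echo,val,v\rangle$; else if $v>key\ge lock$, then once at least $f+1$ triples $(k,w,pk)\in proofs$ satisfy $lock\le pk$ or ($lock\le k$ and $w\ne lock\_val$), send-upon-join $\langle echo,val,v\rangle$. Upon $\langle echo,val,v\rangle$ from $n-f$ parties with the same $val$: send-upon-join $\langle key1,val,v\rangle$; if $key1\_val\ne val$ then $prev\_key1\gets key1$,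 $key1\_val\gets val$; $key1\gets v$. Upon $\langle key1,val,v\rangle$ from $n-f$ parties (same $val$): send-upon-join $\langle key2,val,v\rangle$; if $key2\_val\ne val$ then $prev\_key2\gets key2$, $key2\_val\gets val$; $key2\gets v$. Upon $\langle key2,val,v\rangle$ from $n-f$ (same $val$): send-upon-join $\langle key3,val,v\rangle$; $key3\gets v$, $key3\_val\gets val$. Upon $\langle key3,val,v\rangle$ from $n-f$ (same $val$): send-upon-join $\langle lock,val,v\rangle$; $lock\gets v$, $lock\_val\gets val$. Upon $\langle lock,val,v\rangle$ from $n-f$ (same $val$): if no $done$ sent yet, send $\langle done,val\rangle$ to all. *)

theory Defs
  imports Main
begin

text \<open>Views and keys are integers (so that the initial prev-keys can be -1).
Timing (partial synchrony, Delta, GST) is abstracted: message delays and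
timer expiry are arbitrary (nondeterministic), which only enlarges the set of
executions; the safety lemma is stated over all of them.\<close>

datatype 'v msg =
    Request int
  | Done 'v
  | Abort int
  | Suggest int 'v int 'v int int   \<comment> \<open>key3 key3_val key2 key2_val prev_key2 view\<close>
  | Proof int 'v int int            \<comment> \<open>key1 key1_val prev_key1 view\<close>
  | Propose int 'v int              \<comment> \<open>key val view\<close>
  | Echo 'v int
  | Key1 'v int
  | Key2 'v int
  | Key3 'v int
  | Lock 'v int

fun msg_view :: "'v msg \<Rightarrow> int option" where
  "msg_view (Suggest _ _ _ _ _ v) = Some v"
| "msg_view (Proof _ _ _ v) = Some v"
| "msg_view (Propose _ _ v) = Some v"
| "msg_view (Echo _ v) = Some v"
| "msg_view (Key1 _ v) = Some v"
| "msg_view (Key2 _ v) = Some v"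
| "msg_view (Key3 _ v) = Some v"
| "msg_view (Lock _ v) = Some v"
| "msg_view _ = None"

record 'v pstate =
  inp :: 'v
  lock :: int
  lock_val :: 'v
  key3 :: int
  key3_val :: 'v
  key2 :: int
  key2_val :: 'v
  prev_key2 :: int
  key1 :: int
  key1_val :: 'v
  prev_key1 :: int
  view :: int
  hreq :: "nat \<Rightarrow> int"
  habort :: "nat \<Rightarrow> int"
  done_sent :: bool
  decision :: "'v option"
  dones :: "(nat \<times> 'v) set"
  timer_fired :: bool
  suggest_sent :: bool
  rcvd :: "(nat \<times> 'v msg) set"
  key2_proofs :: "nat \<Rightarrow> (int \<times> 'v \<times> int) option"
  sugg_pending :: "nat \<Rightarrow> (int \<times> 'v) option"
  suggestions :: "nat \<Rightarrow> (int \<times> 'v) option"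
  propose_sent :: bool
  proofs :: "nat \<Rightarrow> (int \<times> 'v \<times> int) option"
  echo_pending :: "'v option"
  echo_done :: bool
  k1_done :: "'v set"
  k2_done :: "'v set"
  k3_done :: "'v set"
  lock_done :: "'v set"
  join :: "'v msg set"
  join_sent :: "(nat \<times> 'v msg) set"

definition parties :: "nat \<Rightarrow> nat set" where
  "parties n = {1..n}"

definition primary :: "nat \<Rightarrow> int \<Rightarrow> nat" where
  "primary n v = nat (v mod int n) + 1"

definition to_all :: "nat \<Rightarrow> 'v msg \<Rightarrow> (nat \<times> 'v msg) set" where
  "to_all n m = {(r, m) | r. r \<in> parties n}"

definition kth_largest :: "nat \<Rightarrow> (nat \<Rightarrow> int) \<Rightarrow> nat \<Rightarrow> int" where
  "kth_largest n h k = rev (sort (map h [1..<Suc n])) ! (k - 1)"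

definition enter_view :: "nat \<Rightarrow> 'v pstate \<Rightarrow> int \<Rightarrow> 'v pstate \<times> (nat \<times> 'v msg) set" where
  "enter_view n s w =
    (s\<lparr>view := w, timer_fired := False, suggest_sent := False, rcvd := {},
        key2_proofs := (\<lambda>_. None), sugg_pending := (\<lambda>_. None), suggestions := (\<lambda>_. None),
        propose_sent := False, proofs := (\<lambda>_. None), echo_pending := None, echo_done := False,
        k1_done := {}, k2_done := {}, k3_done := {}, lock_done := {},
        join := {Proof (key1 s) (key1_val s) (prev_key1 s) w}, join_sent := {}\<rparr>,
     to_all n (Request w))"

definition base_state :: "'v \<Rightarrow> 'v pstate" where
  "base_state x = \<lparr>inp = x, lock = 0, lock_val = x, key3 = 0, key3_val = x,
     key2 = 0, key2_val = x, prev_key2 = -1, key1 = 0, key1_val = x, prev_key1 = -1,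
     view = 0, hreq = (\<lambda>_. 0), habort = (\<lambda>_. 0), done_sent = False, decision = None,
     dones = {}, timer_fired = False, suggest_sent = False, rcvd = {},
     key2_proofs = (\<lambda>_. None), sugg_pending = (\<lambda>_. None), suggestions = (\<lambda>_. None),
     propose_sent = False, proofs = (\<lambda>_. None), echo_pending = None, echo_done = False,
     k1_done = {}, k2_done = {}, k3_done = {}, lock_done = {}, join = {}, join_sent = {}\<rparr>"

definition has_suggest_from :: "'v pstate \<Rightarrow> nat \<Rightarrow> bool" where
  "has_suggest_from s j = (\<exists>a b c d e g. (j, Suggest a b c d e g) \<in> rcvd s)"
definition has_proof_from :: "'v pstate \<Rightarrow> nat \<Rightarrow> bool" where
  "has_proof_from s j = (\<exists>a b c g. (j, Proof a b c g) \<in> rcvd s)"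
definition has_propose_from :: "'v pstate \<Rightarrow> nat \<Rightarrow> bool" where
  "has_propose_from s j = (\<exists>a b g. (j, Propose a b g) \<in> rcvd s)"

fun process_view_msg :: "nat \<Rightarrow> nat \<Rightarrow> nat \<Rightarrow> 'v msg \<Rightarrow> 'v pstate \<Rightarrow> 'v pstate \<times> (nat \<times> 'v msg) set" where
  "process_view_msg n i j (Suggest k3 v3 k2 v2 pk2 v) s =
     (if i = primary n v \<and> \<not> has_suggest_from s j then
        (let s1 = (if pk2 < k2 \<and> k2 < v then s\<lparr>key2_proofs := (key2_proofs s)(j := Some (k2, v2, pk2))\<rparr> else s);
             s2 = (if k3 = 0 then s1\<lparr>suggestions := (suggestions s1)(j := Some (k3, v3))\<rparr>
                   else if k3 < v then s1\<lparr>sugg_pending := (sugg_pending s1)(j := Some (k3, v3))\<rparr>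
                   else s1)
         in (s2, {}))
      else (s, {}))"
| "process_view_msg n i j (Proof k1 v1 pk1 v) s =
     (if \<not> has_proof_from s j \<and> v > k1 \<and> k1 > pk1
      then (s\<lparr>proofs := (proofs s)(j := Some (k1, v1, pk1))\<rparr>, {}) else (s, {}))"
| "process_view_msg n i j (Propose key val v) s =
     (if j = primary n v \<and> \<not> has_propose_from s j then
        (if lock s = 0 \<or> val = lock_val s
         then (s\<lparr>join := insert (Echo val v) (join s), echo_done := True\<rparr>, {})
         else if v > key \<and> key \<ge> lock s
         then (s\<lparr>echo_pending := Some val\<rparr>, {})
         else (s, {}))
      else (s, {}))"
| "process_view_msg n i j m s = (s, {})"

definition deliver :: "nat \<Rightarrow> nat \<Rightarrow> nat \<Rightarrow> nat \<Rightarrow> 'v msg \<Rightarrow> 'v pstate \<Rightarrow> 'v pstate \<times> (nat \<times> 'v msg) set" where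
  "deliver n f i j m s =
    (case m of
       Request v \<Rightarrow> (s\<lparr>hreq := (hreq s)(j := max (hreq s j) v)\<rparr>, {})
     | Done val \<Rightarrow> (s\<lparr>dones := insert (j, val) (dones s)\<rparr>, {})
     | Abort v \<Rightarrow>
         (if habort s j < v then
            (let h1 = (habort s)(j := v);
                 u = kth_largest n h1 (f + 1);
                 h2 = (if u > h1 i then h1(i := u) else h1);
                 out1 = (if u > h1 i then to_all n (Abort u) else {});
                 w = kth_largest n h2 (n - f);
                 s1 = s\<lparr>habort := h2\<rparr>
             in if w \<ge> view s then (fst (enter_view n s1 (w + 1)), out1 \<union> snd (enter_view n s1 (w + 1)))
                else (s1, out1))
          else (s, {}))
     | _ \<Rightarrow>
         (if msg_view m = Some (view s)
          then (let (s1, out) = process_view_msg n i j m s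
                in (s1\<lparr>rcvd := insert (j, m) (rcvd s1)\<rparr>, out))
          else (s, {})))"

definition count_parties :: "nat \<Rightarrow> (nat \<Rightarrow> bool) \<Rightarrow> nat" where
  "count_parties n P = card {j \<in> parties n. P j}"

text \<open>Internal (triggered) actions of party i.  A party performs all enabled
internal actions before it handles a new delivery or timer event.\<close>
inductive istep :: "nat \<Rightarrow> nat \<Rightarrow> nat \<Rightarrow> 'v pstate \<Rightarrow> 'v pstate \<Rightarrow> (nat \<times> 'v msg) set \<Rightarrow> bool"
  for n f i where
  suggest:
    "\<lbrakk>\<not> suggest_sent s; hreq s (primary n (view s)) = view s\<rbrakk> \<Longrightarrow>
     istep n f i s (s\<lparr>suggest_sent := True\<rparr>)
       {(primary n (view s), Suggest (key3 s) (key3_val s) (key2 s) (key2_val s) (prev_key2 s) (view s))}"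
| accept_suggestion:
    "\<lbrakk>i = primary n (view s); sugg_pending s j = Some (k3, v3);
      count_parties n (\<lambda>l. \<exists>k w pk. key2_proofs s l = Some (k, w, pk) \<and> (k3 \<le> pk \<or> (k3 \<le> k \<and> w = v3))) \<ge> f + 1\<rbrakk> \<Longrightarrow>
     istep n f i s (s\<lparr>suggestions := (suggestions s)(j := Some (k3, v3)),
                      sugg_pending := (sugg_pending s)(j := None)\<rparr>) {}"
| propose:
    "\<lbrakk>i = primary n (view s); \<not> propose_sent s;
      count_parties n (\<lambda>l. suggestions s l \<noteq> None) \<ge> n - f;
      suggestions s j = Some (k, w);
      \<forall>l k' w'. suggestions s l = Some (k', w') \<longrightarrow> k' \<le> k\<rbrakk> \<Longrightarrow>
     istep n f i s (s\<lparr>propose_sent := True, join := insert (Propose k w (view s)) (join s)\<rparr>) {}"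
| pending_echo:
    "\<lbrakk>echo_pending s = Some val;
      count_parties n (\<lambda>l. \<exists>k w pk. proofs s l = Some (k, w, pk) \<and>
                            (lock s \<le> pk \<or> (lock s \<le> k \<and> w \<noteq> lock_val s))) \<ge> f + 1\<rbrakk> \<Longrightarrow>
     istep n f i s (s\<lparr>echo_pending := None, echo_done := True,
                      join := insert (Echo val (view s)) (join s)\<rparr>) {}"
| key1_step:
    "\<lbrakk>val \<notin> k1_done s; count_parties n (\<lambda>l. (l, Echo val (view s)) \<in> rcvd s) \<ge> n - f\<rbrakk> \<Longrightarrow>
     istep n f i s (s\<lparr>k1_done := insert val (k1_done s),
                      join := insert (Key1 val (view s)) (join s),
                      prev_key1 := (if key1_val s \<noteq> val then key1 s else prev_key1 s),
                      key1_val := val, key1 := view s\<rparr>) {}"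
| key2_step:
    "\<lbrakk>val \<notin> k2_done s; count_parties n (\<lambda>l. (l, Key1 val (view s)) \<in> rcvd s) \<ge> n - f\<rbrakk> \<Longrightarrow>
     istep n f i s (s\<lparr>k2_done := insert val (k2_done s),
                      join := insert (Key2 val (view s)) (join s),
                      prev_key2 := (if key2_val s \<noteq> val then key2 s else prev_key2 s),
                      key2_val := val, key2 := view s\<rparr>) {}"
| key3_step:
    "\<lbrakk>val \<notin> k3_done s; count_parties n (\<lambda>l. (l, Key2 val (view s)) \<in> rcvd s) \<ge> n - f\<rbrakk> \<Longrightarrow>
     istep n f i s (s\<lparr>k3_done := insert val (k3_done s),
                      join := insert (Key3 val (view s)) (join s),
                      key3 := view s, key3_val := val\<rparr>) {}"
| lock_step:
    "\<lbrakk>val \<notin> lock_done s; count_parties n (\<lambda>l. (l, Key3 val (view s)) \<in> rcvd s) \<ge> n - f\<rbrakk> \<Longrightarrow>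
     istep n f i s (s\<lparr>lock_done := insert val (lock_done s),
                      join := insert (Lock val (view s)) (join s),
                      lock := view s, lock_val := val\<rparr>) {}"
| lock_quorum_done:
    "\<lbrakk>\<not> done_sent s; count_parties n (\<lambda>l. (l, Lock val (view s)) \<in> rcvd s) \<ge> n - f\<rbrakk> \<Longrightarrow>
     istep n f i s (s\<lparr>done_sent := True\<rparr>) (to_all n (Done val))"
| join_send:
    "\<lbrakk>m \<in> join s; j \<in> parties n; hreq s j = view s; (j, m) \<notin> join_sent s\<rbrakk> \<Longrightarrow>
     istep n f i s (s\<lparr>join_sent := insert (j, m) (join_sent s)\<rparr>) {(j, m)}"
| done_relay:
    "\<lbrakk>\<not> done_sent s; count_parties n (\<lambda>l. (l, val) \<in> dones s) \<ge> f + 1\<rbrakk> \<Longrightarrow>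
     istep n f i s (s\<lparr>done_sent := True\<rparr>) (to_all n (Done val))"
| decide:
    "\<lbrakk>decision s = None; count_parties n (\<lambda>l. (l, val) \<in> dones s) \<ge> n - f\<rbrakk> \<Longrightarrow>
     istep n f i s (s\<lparr>decision := Some val\<rparr>) {}"

definition quiescent :: "nat \<Rightarrow> nat \<Rightarrow> nat \<Rightarrow> 'v pstate \<Rightarrow> bool" where
  "quiescent n f i s = (\<not> (\<exists>s' out. istep n f i s s' out))"

text \<open>Global configuration: local states and the set of sent messages
(sender, receiver, message).  Sent messages may be delivered at any time.\<close>
type_synonym 'v config = "(nat \<Rightarrow> 'v pstate) \<times> (nat \<times> nat \<times> 'v msg) set"

definition sends :: "nat \<Rightarrow> (nat \<times> 'v msg) set \<Rightarrow> (nat \<times> nat \<times> 'v msg) set" where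
  "sends i out = {(i, r, m) | r m. (r, m) \<in> out}"

definition init_config :: "nat \<Rightarrow> nat set \<Rightarrow> (nat \<Rightarrow> 'v) \<Rightarrow> 'v config" where
  "init_config n F x =
    ((\<lambda>i. fst (enter_view n (base_state (x i)) 0)),
     (\<Union>i \<in> parties n - F. sends i (snd (enter_view n (base_state (x i)) 0))))"

inductive reachable :: "nat \<Rightarrow> nat \<Rightarrow> nat set \<Rightarrow> (nat \<Rightarrow> 'v) \<Rightarrow> 'v config \<Rightarrow> bool"
  for n f F x where
  init: "reachable n f F x (init_config n F x)"
| byzantine:
    "\<lbrakk>reachable n f F x (ls, net); j \<in> F; r \<in> parties n\<rbrakk> \<Longrightarrow>
     reachable n f F x (ls, insert (j, r, m) net)"
| internal:
    "\<lbrakk>reachable n f F x (ls, net); i \<in> parties n - F; decision (ls i) = None;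
      istep n f i (ls i) s' out\<rbrakk> \<Longrightarrow>
     reachable n f F x (ls(i := s'), net \<union> sends i out)"
| delivery:
    "\<lbrakk>reachable n f F x (ls, net); i \<in> parties n - F; decision (ls i) = None;
      quiescent n f i (ls i); (j, i, m) \<in> net; deliver n f i j m (ls i) = (s', out)\<rbrakk> \<Longrightarrow>
     reachable n f F x (ls(i := s'), net \<union> sends i out)"
| timeout:
    "\<lbrakk>reachable n f F x (ls, net); i \<in> parties n - F; decision (ls i) = None;
      quiescent n f i (ls i); \<not> timer_fired (ls i)\<rbrakk> \<Longrightarrow>
     reachable n f F x (ls(i := (ls i)\<lparr>timer_fired := True\<rparr>),
                        net \<union> sends i (to_all n (Abort (view (ls i)))))"

end

theory Submission
  imports Defs
begin

text \<open>A nonfaulty party sends \<open>\<langle>key1, val, v\<rangle>\<close> only after receiving \<open>\<langle>echo, val, v\<rangle>\<close>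
from \<open>n - f\<close> parties, and it echoes at most one value per view.  Two quorums of size
\<open>n - f\<close> intersect in more than \<open>f\<close> parties when \<open>3f < n\<close>, so they share a nonfaulty party,
which must have echoed both \<open>val\<close> and \<open>val'\<close> in view \<open>v\<close>.  Both facts are part of an
inductive invariant of every nonfaulty party.\<close>

lemma quorums_meet_outside:
  assumes "finite U" "A \<subseteq> U" "B \<subseteq> U" "F \<subseteq> U"
    and "card U + card F < card A + card B"
  shows "\<exists>l \<in> A \<inter> B. l \<notin> F"
proof (rule ccontr)
  assume "\<not> ?thesis"
  then have "A \<inter> B \<subseteq> F" by blast
  then have "card (A \<inter> B) \<le> card F"
    using assms(1,4) by (meson card_mono finite_subset)
  moreover have "card (A \<union> B) \<le> card U"
    using assms(1-3) by (simp add: card_mono)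
  moreover have "card A + card B = card (A \<union> B) + card (A \<inter> B)"
    using assms(1-3) by (meson card_Un_Int finite_subset)
  ultimately show False
    using assms(5) by linarith
qed

lemma count_parties_mono:
  assumes "\<And>l. l \<in> parties n \<Longrightarrow> P l \<Longrightarrow> Q l"
  shows "count_parties n P \<le> count_parties n Q"
  unfolding count_parties_def
  by (rule card_mono) (auto simp: assms parties_def)

definition echo_quorum :: "nat \<Rightarrow> nat \<Rightarrow> nat \<Rightarrow> (nat \<times> nat \<times> 'v msg) set \<Rightarrow> 'v \<Rightarrow> int \<Rightarrow> bool" where
  "echo_quorum n f i net a v \<longleftrightarrow> n - f \<le> count_parties n (\<lambda>l. (l, i, Echo a v) \<in> net)"

lemma echo_quorum_mono:
  assumes "echo_quorum n f i net a v" "net \<subseteq> net'"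
  shows "echo_quorum n f i net' a v"
proof -
  have "count_parties n (\<lambda>l. (l, i, Echo a v) \<in> net) \<le> count_parties n (\<lambda>l. (l, i, Echo a v) \<in> net')"
    by (rule count_parties_mono) (use assms(2) in blast)
  with assms(1) show ?thesis
    unfolding echo_quorum_def by linarith
qed

text \<open>Besides the echoes already sent, this counts those party \<open>i\<close> is committed to in its
current view: an echo may wait in \<open>join\<close> for the receiver's request, or in \<open>echo_pending\<close>
for enough proofs.\<close>

definition echo_values :: "nat \<Rightarrow> 'v pstate \<Rightarrow> (nat \<times> nat \<times> 'v msg) set \<Rightarrow> int \<Rightarrow> 'v set" where
  "echo_values i s net v = {a. (\<exists>r. (i, r, Echo a v) \<in> net) \<or>
     (view s = v \<and> (Echo a v \<in> join s \<or> echo_pending s = Some a))}"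

text \<open>The conjuncts about echoes make uniqueness per view inductive: echoes are sent only in
the current view, so a freshly entered view (whose per-view state is reset) has none, and no
echo is committed before a proposal of the primary is recorded in \<open>rcvd\<close>, since only the
first such proposal triggers one.\<close>

definition party_inv :: "nat \<Rightarrow> nat \<Rightarrow> nat \<Rightarrow> 'v pstate \<Rightarrow> (nat \<times> nat \<times> 'v msg) set \<Rightarrow> bool" where
  "party_inv n f i s net \<longleftrightarrow>
   (\<forall>l m. (l, m) \<in> rcvd s \<longrightarrow> (l, i, m) \<in> net) \<and>
   (\<forall>a v. Echo a v \<in> join s \<longrightarrow> v = view s) \<and>
   (\<forall>a v r. (i, r, Echo a v) \<in> net \<longrightarrow> v \<le> view s) \<and>
   (\<forall>v a b. a \<in> echo_values i s net v \<longrightarrow> b \<in> echo_values i s net v \<longrightarrow> a = b) \<and>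
   (\<not> has_propose_from s (primary n (view s)) \<longrightarrow> echo_values i s net (view s) = {}) \<and>
   (\<forall>a v. Key1 a v \<in> join s \<longrightarrow> echo_quorum n f i net a v) \<and>
   (\<forall>a v r. (i, r, Key1 a v) \<in> net \<longrightarrow> echo_quorum n f i net a v)"

fun is_echo_or_key1 :: "'v msg \<Rightarrow> bool" where
  "is_echo_or_key1 (Echo _ _) = True"
| "is_echo_or_key1 (Key1 _ _) = True"
| "is_echo_or_key1 _ = False"

lemma party_inv_net_mono:
  assumes I: "party_inv n f i s net" and "net \<subseteq> net'"
    and echo: "\<And>r a v. (i, r, Echo a v) \<in> net' \<Longrightarrow>
      (i, r, Echo a v) \<in> net \<or> (v = view s \<and> Echo a v \<in> join s)"
    and key1: "\<And>r a v. (i, r, Key1 a v) \<in> net' \<Longrightarrow> (i, r, Key1 a v) \<in> net \<or> Key1 a v \<in> join s"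
  shows "party_inv n f i s net'"
proof -
  have quorum: "echo_quorum n f i net' a v" if "echo_quorum n f i net a v" for a v
    using that \<open>net \<subseteq> net'\<close> by (rule echo_quorum_mono)
  have echoes: "echo_values i s net' = echo_values i s net"
    using \<open>net \<subseteq> net'\<close> echo unfolding echo_values_def by blast
  have "\<forall>l m. (l, m) \<in> rcvd s \<longrightarrow> (l, i, m) \<in> net'"
    using I \<open>net \<subseteq> net'\<close> unfolding party_inv_def by blast
  moreover have "\<forall>a v r. (i, r, Echo a v) \<in> net' \<longrightarrow> v \<le> view s"
    using I echo unfolding party_inv_def by fastforce
  moreover have "\<forall>a v. Key1 a v \<in> join s \<longrightarrow> echo_quorum n f i net' a v"
    using I quorum unfolding party_inv_def by blast
  moreover have "\<forall>a v r. (i, r, Key1 a v) \<in> net' \<longrightarrow> echo_quorum n f i net' a v"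
  proof (intro allI impI)
    fix a v r
    assume "(i, r, Key1 a v) \<in> net'"
    with key1 I have "echo_quorum n f i net a v"
      unfolding party_inv_def by blast
    then show "echo_quorum n f i net' a v" by (rule quorum)
  qed
  ultimately show ?thesis
    using I unfolding party_inv_def echoes by simp
qed

lemma party_inv_other_sender:
  "party_inv n f k s net \<Longrightarrow> k \<noteq> i \<Longrightarrow> party_inv n f k s (net \<union> sends i out)"
  by (erule party_inv_net_mono) (auto simp: sends_def)

lemma party_inv_local_update:
  assumes I: "party_inv n f i s net"
    and "rcvd s \<subseteq> rcvd s'" "\<And>l m. (l, m) \<in> rcvd s' \<Longrightarrow> (l, i, m) \<in> net"
    and "view s' = view s" "\<And>v. echo_values i s' net v = echo_values i s net v"
    and "\<And>a v. Echo a v \<in> join s' \<Longrightarrow> v = view s"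
    and "\<And>a v. Key1 a v \<in> join s' \<Longrightarrow> echo_quorum n f i net a v"
  shows "party_inv n f i s' net"
proof -
  have "has_propose_from s' l" if "has_propose_from s l" for l
    using that \<open>rcvd s \<subseteq> rcvd s'\<close> unfolding has_propose_from_def by blast
  then have "\<not> has_propose_from s' (primary n (view s')) \<longrightarrow> echo_values i s' net (view s') = {}"
    using I assms(4,5) unfolding party_inv_def by metis
  with I assms(3-7) show ?thesis
    unfolding party_inv_def by simp
qed

lemma party_inv_frame:
  assumes I: "party_inv n f i s net"
    and "rcvd s' = rcvd s" "view s' = view s" "echo_pending s' = echo_pending s"
    and "join s \<subseteq> join s'" and joined: "\<And>m. m \<in> join s' \<Longrightarrow> m \<notin> join s \<Longrightarrow> \<not> is_echo_or_key1 m"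
    and out: "\<And>r m. (r, m) \<in> out \<Longrightarrow> \<not> is_echo_or_key1 m"
  shows "party_inv n f i s' (net \<union> sends i out)"
proof -
  have echo: "Echo a v \<in> join s' \<longleftrightarrow> Echo a v \<in> join s"
    and key1: "Key1 a v \<in> join s' \<longleftrightarrow> Key1 a v \<in> join s" for a v
    using \<open>join s \<subseteq> join s'\<close> joined by fastforce+
  have "party_inv n f i s' net"
  proof (rule party_inv_local_update[OF I])
    show "echo_values i s' net v = echo_values i s net v" for v
      unfolding echo_values_def echo assms(3,4) ..
  qed (use I assms(2,3) echo key1 in \<open>auto simp: party_inv_def\<close>)
  then show ?thesis
    by (rule party_inv_net_mono) (auto simp: sends_def dest: out)
qed

lemma party_inv_receive:
  assumes I: "party_inv n f i s net" and "(j, i, m) \<in> net"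
  shows "party_inv n f i (s\<lparr>rcvd := insert (j, m) (rcvd s)\<rparr>) net"
  by (rule party_inv_local_update[OF I])
    (use I assms(2) in \<open>auto simp: party_inv_def echo_values_def\<close>)

lemma party_inv_add_key1:
  assumes I: "party_inv n f i s net" and "echo_quorum n f i net a v"
  shows "party_inv n f i (s\<lparr>join := insert (Key1 a v) (join s)\<rparr>) net"
  by (rule party_inv_local_update[OF I])
    (use I assms(2) in \<open>auto simp: party_inv_def echo_values_def\<close>)

lemma party_inv_commit_pending_echo:
  assumes I: "party_inv n f i s net" and "echo_pending s = Some a"
  shows "party_inv n f i (s\<lparr>echo_pending := None, join := insert (Echo a (view s)) (join s)\<rparr>) net"
  by (rule party_inv_local_update[OF I])
    (use I assms(2) in \<open>auto simp: party_inv_def echo_values_def\<close>)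

lemma party_inv_istep:
  assumes I: "party_inv n f i s net" and "istep n f i s s' out"
  shows "party_inv n f i s' (net \<union> sends i out)"
  using \<open>istep n f i s s' out\<close>
proof (cases rule: istep.cases)
  case (pending_echo a)
  then have "party_inv n f i (s\<lparr>echo_pending := None, join := insert (Echo a (view s)) (join s)\<rparr>) net"
    using party_inv_commit_pending_echo[OF I] by blast
  from party_inv_frame[OF this, of s' "{}"] show ?thesis
    using pending_echo by simp
next
  case (key1_step a)
  have "count_parties n (\<lambda>l. (l, Echo a (view s)) \<in> rcvd s)
      \<le> count_parties n (\<lambda>l. (l, i, Echo a (view s)) \<in> net)"
    by (rule count_parties_mono) (use I in \<open>auto simp: party_inv_def\<close>)
  then have "echo_quorum n f i net a (view s)"
    using key1_step(4) unfolding echo_quorum_def by linarith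
  from party_inv_add_key1[OF I this] have "party_inv n f i (s\<lparr>join := insert (Key1 a (view s)) (join s)\<rparr>) net" .
  from party_inv_frame[OF this, of s' "{}"] show ?thesis
    using key1_step by simp
next
  case (join_send m j)
  have "party_inv n f i s (net \<union> sends i out)"
    by (rule party_inv_net_mono[OF I]) (use I join_send in \<open>auto simp: sends_def party_inv_def\<close>)
  from party_inv_frame[OF this, of s' "{}"] show ?thesis
    using join_send by (simp add: sends_def)
qed (rule party_inv_frame[OF I]; auto simp: to_all_def)+

lemma process_view_msg_Propose:
  assumes "process_view_msg n i j (Propose k a v) s = (s1, out)"
  shows "out = {} \<and> rcvd s1 = rcvd s \<and> view s1 = view s \<and>
    join s \<subseteq> join s1 \<and> join s1 \<subseteq> insert (Echo a v) (join s) \<and>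
    (echo_pending s1 = echo_pending s \<or> echo_pending s1 = Some a) \<and>
    (s1 = s \<or> j = primary n v \<and> \<not> has_propose_from s j)"
  using assms by (simp split: if_split_asm) (elim conjE, hypsubst, simp add: subset_insertI)+

lemma party_inv_receive_propose:
  assumes I: "party_inv n f i s net" and "(j, i, Propose k a (view s)) \<in> net"
    and process: "process_view_msg n i j (Propose k a (view s)) s = (s1, out)"
  shows "party_inv n f i (s1\<lparr>rcvd := insert (j, Propose k a (view s)) (rcvd s1)\<rparr>) (net \<union> sends i out)"
proof -
  let ?s' = "s1\<lparr>rcvd := insert (j, Propose k a (view s)) (rcvd s1)\<rparr>"
  note effect = process_view_msg_Propose[OF process]
  then have "out = {}" by simp
  from effect consider (ignored) "s1 = s" | (first) "j = primary n (view s)" "\<not> has_propose_from s j"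
    by blast
  then show ?thesis
  proof cases
    case ignored
    then show ?thesis
      using party_inv_receive[OF I assms(2)] \<open>out = {}\<close> by (simp add: sends_def)
  next
    case first
    have no_echo_yet: "echo_values i s net (view s) = {}"
      using I first unfolding party_inv_def by blast
    have same_echoes: "echo_values i ?s' net w = echo_values i s net w" if "w \<noteq> view s" for w
      using that effect unfolding echo_values_def by simp
    have "echo_values i ?s' net (view s) \<subseteq> {a}"
      using no_echo_yet effect unfolding echo_values_def by auto
    then have "\<forall>w b c. b \<in> echo_values i ?s' net w \<longrightarrow> c \<in> echo_values i ?s' net w \<longrightarrow> b = c"
      using I same_echoes unfolding party_inv_def by (metis singletonD subsetD)
    moreover have "has_propose_from ?s' (primary n (view ?s'))"
      using first effect unfolding has_propose_from_def by auto
    moreover have "\<forall>l m. (l, m) \<in> rcvd ?s' \<longrightarrow> (l, i, m) \<in> net"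
      using I assms(2) effect unfolding party_inv_def by auto
    moreover have "\<forall>b w. Echo b w \<in> join ?s' \<longrightarrow> w = view ?s'"
      using I effect unfolding party_inv_def by auto
    moreover have "\<forall>b w. Key1 b w \<in> join ?s' \<longrightarrow> echo_quorum n f i net b w"
      using I effect unfolding party_inv_def by auto
    ultimately show ?thesis
      using I effect \<open>out = {}\<close> unfolding party_inv_def by (simp add: sends_def)
  qed
qed

lemma party_inv_process_view_msg:
  assumes I: "party_inv n f i s net" and "(j, i, m) \<in> net" and "msg_view m = Some (view s)"
    and process: "process_view_msg n i j m s = (s1, out)"
  shows "party_inv n f i (s1\<lparr>rcvd := insert (j, m) (rcvd s1)\<rparr>) (net \<union> sends i out)"
proof (cases "\<exists>k a. m = Propose k a (view s)")
  case True
  then show ?thesis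
    using party_inv_receive_propose[OF I] assms(2) process by blast
next
  case False
  then have "out = {} \<and> rcvd s1 = rcvd s \<and> join s1 = join s \<and> view s1 = view s
      \<and> echo_pending s1 = echo_pending s"
    using assms(3) process by (cases m) (auto simp: Let_def split: if_splits)
  then have "party_inv n f i s1 net" and "out = {}"
    using party_inv_frame[OF I, of s1 "{}"] by (simp_all add: sends_def)
  then show ?thesis
    using party_inv_receive assms(2) by (simp add: sends_def)
qed

lemma party_inv_enter_view:
  assumes I: "party_inv n f i s net" and "view s < w"
  shows "party_inv n f i (fst (enter_view n s w)) net"
proof -
  let ?t = "fst (enter_view n s w)"
  have t: "view ?t = w" "rcvd ?t = {}" "join ?t = {Proof (key1 s) (key1_val s) (prev_key1 s) w}"
    "echo_pending ?t = None"
    by (simp_all add: enter_view_def)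
  have sent_before: "u \<le> view s" if "(i, r, Echo a u) \<in> net" for r a u
    using I that unfolding party_inv_def by blast
  have "echo_values i ?t net u \<subseteq> echo_values i s net u" for u
    unfolding echo_values_def t by auto
  then have "\<forall>u b c. b \<in> echo_values i ?t net u \<longrightarrow> c \<in> echo_values i ?t net u \<longrightarrow> b = c"
    using I unfolding party_inv_def by blast
  moreover have "echo_values i ?t net w = {}"
    using sent_before \<open>view s < w\<close> unfolding echo_values_def t by force
  moreover have "\<forall>a u r. (i, r, Echo a u) \<in> net \<longrightarrow> u \<le> view ?t"
    using sent_before \<open>view s < w\<close> unfolding t by force
  ultimately show ?thesis
    using I unfolding party_inv_def t by simp
qed

lemma party_inv_deliver_abort:
  assumes I: "party_inv n f i s net" and deliver: "deliver n f i j (Abort u) s = (s', out)"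
  shows "party_inv n f i s' (net \<union> sends i out)"
proof -
  have habort: "party_inv n f i (s\<lparr>habort := h\<rparr>) net" for h
    using I unfolding party_inv_def echo_values_def has_propose_from_def by simp
  have "s' = s \<or> (\<exists>h. s' = s\<lparr>habort := h\<rparr>)
      \<or> (\<exists>h w. view s \<le> w \<and> s' = fst (enter_view n (s\<lparr>habort := h\<rparr>) (w + 1)))"
    using deliver unfolding deliver_def Let_def by (auto split: if_splits)
  then have inv: "party_inv n f i s' net"
    using I habort party_inv_enter_view[OF habort] by fastforce
  have out: "\<not> is_echo_or_key1 m" if "(r, m) \<in> out" for r m
    using deliver that unfolding deliver_def Let_def enter_view_def to_all_def
    by (auto split: if_splits)
  from inv show ?thesis
    by (rule party_inv_net_mono) (auto simp: sends_def dest: out)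
qed

lemma deliver_view_msg:
  assumes "msg_view m \<noteq> None"
  shows "deliver n f i j m s =
    (if msg_view m = Some (view s)
     then (let (s1, out) = process_view_msg n i j m s in (s1\<lparr>rcvd := insert (j, m) (rcvd s1)\<rparr>, out))
     else (s, {}))"
  using assms by (cases m) (simp_all add: deliver_def)

lemma party_inv_deliver:
  assumes I: "party_inv n f i s net" and "(j, i, m) \<in> net"
    and deliver: "deliver n f i j m s = (s', out)"
  shows "party_inv n f i s' (net \<union> sends i out)"
proof (cases "msg_view m")
  case None
  then consider (request) u where "m = Request u" | (done_message) a where "m = Done a"
    | (abort) u where "m = Abort u"
    by (cases m) auto
  then show ?thesis
  proof cases
    case request
    with deliver have "s' = s\<lparr>hreq := (hreq s)(j := max (hreq s j) u)\<rparr>" "out = {}"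
      by (simp_all add: deliver_def)
    then show ?thesis by (auto intro: party_inv_frame[OF I])
  next
    case done_message
    with deliver have "s' = s\<lparr>dones := insert (j, a) (dones s)\<rparr>" "out = {}"
      by (simp_all add: deliver_def)
    then show ?thesis by (auto intro: party_inv_frame[OF I])
  next
    case abort
    then show ?thesis
      using party_inv_deliver_abort[OF I] deliver by blast
  qed
next
  case (Some w)
  show ?thesis
  proof (cases "w = view s")
    case False
    with deliver Some have "s' = s" "out = {}"
      by (simp_all add: deliver_view_msg)
    then show ?thesis
      using I by (simp add: sends_def)
  next
    case True
    obtain s1 out1 where process: "process_view_msg n i j m s = (s1, out1)"
      by fastforce
    with deliver Some True have "s' = s1\<lparr>rcvd := insert (j, m) (rcvd s1)\<rparr>" "out = out1"
      by (simp_all add: deliver_view_msg)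
    then show ?thesis
      using party_inv_process_view_msg[OF I assms(2) _ process] Some True by simp
  qed
qed

lemma party_inv_init: "party_inv n f i (fst (init_config n F x) i) (snd (init_config n F x))"
proof -
  let ?s = "fst (init_config n F x) i"
  have no_echo_or_key1: "(l, r, Echo a v) \<notin> snd (init_config n F x)"
    "(l, r, Key1 a v) \<notin> snd (init_config n F x)" for l r a v
    by (auto simp: init_config_def enter_view_def sends_def to_all_def)
  then have "echo_values i ?s (snd (init_config n F x)) v = {}" for v
    by (simp add: echo_values_def init_config_def enter_view_def)
  with no_echo_or_key1 show ?thesis
    by (simp add: party_inv_def init_config_def enter_view_def)
qed

lemma reachable_party_inv:
  assumes "reachable n f F x c" and "i \<in> parties n - F"
  shows "party_inv n f i (fst c i) (snd c)"
  using assms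
proof (induction arbitrary: i)
  case init
  show ?case by (rule party_inv_init)
next
  case (byzantine ls net j r m)
  then have "j \<noteq> i" by blast
  with byzantine show ?case
    by (auto intro: party_inv_net_mono)
next
  case (internal ls net k s' out)
  then show ?case
    by (cases "i = k") (auto intro: party_inv_istep party_inv_other_sender)
next
  case (delivery ls net k j m s' out)
  then show ?case
    by (cases "i = k") (auto intro: party_inv_deliver party_inv_other_sender)
next
  case (timeout ls net k)
  have "party_inv n f k ((ls k)\<lparr>timer_fired := True\<rparr>) (net \<union> sends k (to_all n (Abort (view (ls k)))))"
    by (rule party_inv_frame) (use timeout in \<open>auto simp: to_all_def\<close>)
  with timeout show ?case
    by (cases "i = k") (auto intro: party_inv_other_sender)
qed

lemma echo_quorums_share_correct_sender:
  assumes "3 * f < n" "F \<subseteq> parties n" "card F \<le> f"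
    and "echo_quorum n f i net a v" "echo_quorum n f j net b w"
  obtains l where "l \<in> parties n - F" "(l, i, Echo a v) \<in> net" "(l, j, Echo b w) \<in> net"
proof -
  let ?A = "{l \<in> parties n. (l, i, Echo a v) \<in> net}"
  let ?B = "{l \<in> parties n. (l, j, Echo b w) \<in> net}"
  have "n - f \<le> card ?A" "n - f \<le> card ?B"
    using assms(4,5) unfolding echo_quorum_def count_parties_def by simp_all
  then have large: "card (parties n) + card F < card ?A + card ?B"
    using assms(1,3) by (simp add: parties_def)
  have "\<exists>l \<in> ?A \<inter> ?B. l \<notin> F"
    by (rule quorums_meet_outside[OF _ _ _ assms(2) large]) (auto simp: parties_def)
  then show ?thesis
    using that by blast
qed

theorem lemma2p3:
  fixes n f :: nat and F :: "nat set" and x :: "nat \<Rightarrow> 'v"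
    and ls :: "nat \<Rightarrow> 'v pstate" and net :: "(nat \<times> nat \<times> 'v msg) set"
  assumes "3 * f < n"
    and "F \<subseteq> parties n" and "card F \<le> f"
    and "reachable n f F x (ls, net)"
    and "i \<in> parties n - F" and "j \<in> parties n - F"
    and "(i, r, Key1 val v) \<in> net" and "(j, r', Key1 val' v) \<in> net"
  shows "val = val'"
proof -
  have inv: "party_inv n f l (ls l) net" if "l \<in> parties n - F" for l
    using reachable_party_inv[OF assms(4) that] by simp
  have "echo_quorum n f i net val v"
    using inv[OF assms(5)] assms(7) unfolding party_inv_def by blast
  moreover have "echo_quorum n f j net val' v"
    using inv[OF assms(6)] assms(8) unfolding party_inv_def by blast
  ultimately obtain l where "l \<in> parties n - F" "(l, i, Echo val v) \<in> net" "(l, j, Echo val' v) \<in> net"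
    using echo_quorums_share_correct_sender assms(1-3) by metis
  then have "val \<in> echo_values l (ls l) net v" "val' \<in> echo_values l (ls l) net v"
    unfolding echo_values_def by auto
  with inv[OF \<open>l \<in> parties n - F\<close>] show ?thesis
    unfolding party_inv_def by blast
qed

end
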